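(* Let $\Lambda$ be an admissible temporal logic over a temporal language $\mathcal L$, let $W_c$ be the set of prime $\mathcal L$-types, ordered by $\Phi\preccurlyeq_c\Psi$ iff $\Phi^+\subseteq\Psi^+$ and $\Psi^-\subseteq\Phi^-$, and let $S_c\subseteq W_c\times W_c$ be the relation $\Phi\mathrel{S_c}\Psi$ iff the pair $(\Phi,\Psi)$ is sensible. Then $S_c$ is a function $W_c\to W_c$ which is monotone (i.e. $\Phi\preccurlyeq_c\Psi$ implies $S_c(\Phi)\preccurlyeq_c S_c(\Psi)$). If moreover $(\circ\varphi\to\circ\psi)\to\circ(\varphi\to\psi)$ is an axiom of $\Lambda$ (for all $\varphi,\psi$), then $S_c$ is also open: whenever $S_c(\Phi)\preccurlyeq_c\Psi$, there is $\Theta\in W_c$ with $\Phi\preccurlyeq_c\Theta$ and $S_c(\Theta)=\Psi$.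
   Context: Formulas are built from $\bot$ and propositional variables using $\wedge,\vee,\to$ and modalities $\circ,\Diamond,\Box,\forall$. A temporal language $\mathcal L_M$ ($M\subseteq\{\Diamond,\Box,\forall\}$) uses $\bot$, variables, $\wedge,\vee,\to,\circ$ and only modalities in $M$. ${\sf ITL}^0_M$ denotes the logic over $\mathcal L_M$ axiomatized by intuitionistic propositional logic, (N1) $\neg\circ\bot$, (N2) $\circ\varphi\wedge\circ\psi\to\circ(\varphi\wedge\psi)$, (N3) $\circ(\varphi\vee\psi)\to\circ\varphi\vee\circ\psi$, (N4) $\circ(\varphi\to\psi)\to(\circ\varphi\to\circ\psi)$, rules modus ponens and from $\varphi$ infer $\circ\varphi$; plus, if $\Diamond\in M$, axiom $\varphi\vee\circ\Diamond\varphi\to\Diamond\varphi$ and rules from $\varphi\to\psi$ infer $\Diamond\varphi\to\Diamond\psi$, from $\circ\varphi\to\varphi$ infer $\Diamond\varphi\to\varphi$; plus, if $\forall\in M$, axioms $\forall\varphi\vee\neg\forall\varphi$, $\forall(\varphi\to\psi)\to(\forall\varphi\to\forall\psi)$, $\forall(\varphi\vee\forall\psi)\to\forall\varphi\vee\forall\psi$, $\forall\varphi\to\varphi$, $\forall\varphi\to\forall\forall\varphi$, $\forall\varphi\leftrightarrow\circ\forall\varphi$ and rule from $\varphi$ infer $\forall\varphi$. An admissible temporal logic over $\mathcal L_M$ is a set of $\mathcal L_M$-formulas containing all substitution instances of the axioms of ${\sf ITL}^0_M$ and closed under its rules. $\Gamma\vdash\Delta$ means there are finite $\Gamma'\subseteq\Gamma$,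 $\Delta'\subseteq\Delta$ with $\bigwedge\Gamma'\to\bigvee\Delta'\in\Lambda$. A prime $\mathcal L$-type is a pair $\Phi=(\Phi^+,\Phi^-)$ of sets of $\mathcal L$-formulas with $\Phi^+\cup\Phi^-=\mathcal L$ and $\Phi^+\not\vdash\Phi^-$. A pair $(\Phi,\Psi)$ is sensible if: $\circ\varphi\in\Phi^+$ implies $\varphi\in\Psi^+$; $\circ\varphi\in\Phi^-$ implies $\varphi\in\Psi^-$; $\Diamond\varphi\in\Phi^+$ implies $\varphi\in\Phi^+$ or $\Diamond\varphi\in\Psi^+$; $\Diamond\varphi\in\Phi^-$ implies $\Diamond\varphi\in\Psi^-$; $\forall\varphi\in\Phi^+$ iff $\forall\varphi\in\Psi^+$; $\forall\varphi\in\Phi^-$ iff $\forall\varphi\in\Psi^-$. *)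

theory Defs
  imports Main
begin

datatype modality = MDia | MBox | MAll

datatype form =
    Bot
  | Var nat
  | And form form
  | Or form form
  | Imp form form
  | Next form
  | Dia form
  | Box form
  | All form

definition Neg :: "form \<Rightarrow> form" where "Neg \<phi> = Imp \<phi> Bot"
definition Iff :: "form \<Rightarrow> form \<Rightarrow> form" where "Iff \<phi> \<psi> = And (Imp \<phi> \<psi>) (Imp \<psi> \<phi>)"
definition Top :: form where "Top = Imp Bot Bot"

fun in_lang :: "modality set \<Rightarrow> form \<Rightarrow> bool" where
  "in_lang M Bot = True"
| "in_lang M (Var p) = True"
| "in_lang M (And a b) = (in_lang M a \<and> in_lang M b)"
| "in_lang M (Or a b) = (in_lang M a \<and> in_lang M b)"
| "in_lang M (Imp a b) = (in_lang M a \<and> in_lang M b)"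
| "in_lang M (Next a) = in_lang M a"
| "in_lang M (Dia a) = (MDia \<in> M \<and> in_lang M a)"
| "in_lang M (Box a) = (MBox \<in> M \<and> in_lang M a)"
| "in_lang M (All a) = (MAll \<in> M \<and> in_lang M a)"

definition lang :: "modality set \<Rightarrow> form set" where
  "lang M = {\<phi>. in_lang M \<phi>}"

text \<open>Axiom schemes of ITL^0_M, instantiated with L_M-formulas (so the set is
closed under substitution). Intuitionistic propositional logic is given by a
standard Hilbert-style axiomatization.\<close>
definition ipl_axioms :: "modality set \<Rightarrow> form set" where
  "ipl_axioms M = {\<theta>. \<exists>\<phi>\<in>lang M. \<exists>\<psi>\<in>lang M. \<exists>\<chi>\<in>lang M.
       \<theta> = Imp \<phi> (Imp \<psi> \<phi>)
     \<or> \<theta> = Imp (Imp \<phi> (Imp \<psi> \<chi>)) (Imp (Imp \<phi> \<psi>) (Imp \<phi> \<chi>))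
     \<or> \<theta> = Imp (And \<phi> \<psi>) \<phi>
     \<or> \<theta> = Imp (And \<phi> \<psi>) \<psi>
     \<or> \<theta> = Imp \<phi> (Imp \<psi> (And \<phi> \<psi>))
     \<or> \<theta> = Imp \<phi> (Or \<phi> \<psi>)
     \<or> \<theta> = Imp \<psi> (Or \<phi> \<psi>)
     \<or> \<theta> = Imp (Imp \<phi> \<chi>) (Imp (Imp \<psi> \<chi>) (Imp (Or \<phi> \<psi>) \<chi>))
     \<or> \<theta> = Imp Bot \<phi>}"

definition next_axioms :: "modality set \<Rightarrow> form set" where
  "next_axioms M = {\<theta>. \<exists>\<phi>\<in>lang M. \<exists>\<psi>\<in>lang M.
       \<theta> = Neg (Next Bot)
     \<or> \<theta> = Imp (And (Next \<phi>) (Next \<psi>)) (Next (And \<phi> \<psi>))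
     \<or> \<theta> = Imp (Next (Or \<phi> \<psi>)) (Or (Next \<phi>) (Next \<psi>))
     \<or> \<theta> = Imp (Next (Imp \<phi> \<psi>)) (Imp (Next \<phi>) (Next \<psi>))}"

definition dia_axioms :: "modality set \<Rightarrow> form set" where
  "dia_axioms M = {\<theta>. MDia \<in> M \<and> (\<exists>\<phi>\<in>lang M.
       \<theta> = Imp (Or \<phi> (Next (Dia \<phi>))) (Dia \<phi>))}"

definition all_axioms :: "modality set \<Rightarrow> form set" where
  "all_axioms M = {\<theta>. MAll \<in> M \<and> (\<exists>\<phi>\<in>lang M. \<exists>\<psi>\<in>lang M.
       \<theta> = Or (All \<phi>) (Neg (All \<phi>))
     \<or> \<theta> = Imp (All (Imp \<phi> \<psi>)) (Imp (All \<phi>) (All \<psi>))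
     \<or> \<theta> = Imp (All (Or \<phi> (All \<psi>))) (Or (All \<phi>) (All \<psi>))
     \<or> \<theta> = Imp (All \<phi>) \<phi>
     \<or> \<theta> = Imp (All \<phi>) (All (All \<phi>))
     \<or> \<theta> = Iff (All \<phi>) (Next (All \<phi>)))}"

definition itl0_axioms :: "modality set \<Rightarrow> form set" where
  "itl0_axioms M = ipl_axioms M \<union> next_axioms M \<union> dia_axioms M \<union> all_axioms M"

text \<open>An admissible temporal logic over L_M (where M \<subseteq> {\<Diamond>,\<box>,\<forall>}, which is
automatic for the type modality).\<close>
definition admissible :: "modality set \<Rightarrow> form set \<Rightarrow> bool" where
  "admissible M \<Lambda> \<longleftrightarrow>
     \<Lambda> \<subseteq> lang M
   \<and> itl0_axioms M \<subseteq> \<Lambda>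
   \<and> (\<forall>\<phi> \<psi>. \<phi> \<in> \<Lambda> \<longrightarrow> Imp \<phi> \<psi> \<in> \<Lambda> \<longrightarrow> \<psi> \<in> \<Lambda>)
   \<and> (\<forall>\<phi>. \<phi> \<in> \<Lambda> \<longrightarrow> Next \<phi> \<in> \<Lambda>)
   \<and> (MDia \<in> M \<longrightarrow>
        (\<forall>\<phi> \<psi>. Imp \<phi> \<psi> \<in> \<Lambda> \<longrightarrow> Imp (Dia \<phi>) (Dia \<psi>) \<in> \<Lambda>)
      \<and> (\<forall>\<phi>. Imp (Next \<phi>) \<phi> \<in> \<Lambda> \<longrightarrow> Imp (Dia \<phi>) \<phi> \<in> \<Lambda>))
   \<and> (MAll \<in> M \<longrightarrow> (\<forall>\<phi>. \<phi> \<in> \<Lambda> \<longrightarrow> All \<phi> \<in> \<Lambda>))"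

fun conj_list :: "form list \<Rightarrow> form" where
  "conj_list [] = Top"
| "conj_list (\<phi> # \<phi>s) = And \<phi> (conj_list \<phi>s)"

fun disj_list :: "form list \<Rightarrow> form" where
  "disj_list [] = Bot"
| "disj_list (\<phi> # \<phi>s) = Or \<phi> (disj_list \<phi>s)"

text \<open>\<Gamma> \<turnstile> \<Delta> relative to \<Lambda>: finite subsets given by lists.\<close>
definition derives :: "form set \<Rightarrow> form set \<Rightarrow> form set \<Rightarrow> bool" where
  "derives \<Lambda> \<Gamma> \<Delta> \<longleftrightarrow>
     (\<exists>gs ds. set gs \<subseteq> \<Gamma> \<and> set ds \<subseteq> \<Delta> \<and> Imp (conj_list gs) (disj_list ds) \<in> \<Lambda>)"

type_synonym ltype = "form set \<times> form set"

definition prime_type :: "modality set \<Rightarrow> form set \<Rightarrow> ltype \<Rightarrow> bool" where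
  "prime_type M \<Lambda> \<Phi> \<longleftrightarrow>
     fst \<Phi> \<subseteq> lang M \<and> snd \<Phi> \<subseteq> lang M \<and> fst \<Phi> \<union> snd \<Phi> = lang M
   \<and> \<not> derives \<Lambda> (fst \<Phi>) (snd \<Phi>)"

definition Wc :: "modality set \<Rightarrow> form set \<Rightarrow> ltype set" where
  "Wc M \<Lambda> = {\<Phi>. prime_type M \<Lambda> \<Phi>}"

definition leq_c :: "ltype \<Rightarrow> ltype \<Rightarrow> bool" where
  "leq_c \<Phi> \<Psi> \<longleftrightarrow> fst \<Phi> \<subseteq> fst \<Psi> \<and> snd \<Psi> \<subseteq> snd \<Phi>"

definition sensible :: "ltype \<Rightarrow> ltype \<Rightarrow> bool" where
  "sensible \<Phi> \<Psi> \<longleftrightarrow>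
     (\<forall>\<phi>. Next \<phi> \<in> fst \<Phi> \<longrightarrow> \<phi> \<in> fst \<Psi>)
   \<and> (\<forall>\<phi>. Next \<phi> \<in> snd \<Phi> \<longrightarrow> \<phi> \<in> snd \<Psi>)
   \<and> (\<forall>\<phi>. Dia \<phi> \<in> fst \<Phi> \<longrightarrow> \<phi> \<in> fst \<Phi> \<or> Dia \<phi> \<in> fst \<Psi>)
   \<and> (\<forall>\<phi>. Dia \<phi> \<in> snd \<Phi> \<longrightarrow> Dia \<phi> \<in> snd \<Psi>)
   \<and> (\<forall>\<phi>. All \<phi> \<in> fst \<Phi> \<longleftrightarrow> All \<phi> \<in> fst \<Psi>)
   \<and> (\<forall>\<phi>. All \<phi> \<in> snd \<Phi> \<longleftrightarrow> All \<phi> \<in> snd \<Psi>)"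

definition Sc :: "modality set \<Rightarrow> form set \<Rightarrow> (ltype \<times> ltype) set" where
  "Sc M \<Lambda> = {(\<Phi>, \<Psi>). \<Phi> \<in> Wc M \<Lambda> \<and> \<Psi> \<in> Wc M \<Lambda> \<and> sensible \<Phi> \<Psi>}"

end

theory Submission
  imports Defs
begin

(*
  Sensibility forces the successor of a prime type Phi to be
  S(Phi) = ({phi. Next phi in Phi+}, {phi. Next phi in Phi-}); the axioms (N1)-(N4) make S(Phi)
  a prime type again, and the Dia- and All-clauses of sensibility follow from the fixpoint
  axiom and induction rule for Dia and from All phi <-> Next (All phi). For openness, given S(Phi) below Psi, a Lindenbaum argument extends
  (Phi+ \<union> Next ` Psi+, Next ` Psi-) to a prime type Theta, which satisfies S(Theta) = Psi.
  The converse K axiom (Next phi --> Next psi) --> Next (phi --> psi) is exactly what makes this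
  pair consistent.
*)

lemma lang_simps [simp]:
  "Bot \<in> lang M" "Var p \<in> lang M" "Top \<in> lang M"
  "And \<phi> \<psi> \<in> lang M \<longleftrightarrow> \<phi> \<in> lang M \<and> \<psi> \<in> lang M"
  "Or \<phi> \<psi> \<in> lang M \<longleftrightarrow> \<phi> \<in> lang M \<and> \<psi> \<in> lang M"
  "Imp \<phi> \<psi> \<in> lang M \<longleftrightarrow> \<phi> \<in> lang M \<and> \<psi> \<in> lang M"
  "Next \<phi> \<in> lang M \<longleftrightarrow> \<phi> \<in> lang M"
  "Dia \<phi> \<in> lang M \<longleftrightarrow> MDia \<in> M \<and> \<phi> \<in> lang M"
  "Box \<phi> \<in> lang M \<longleftrightarrow> MBox \<in> M \<and> \<phi> \<in> lang M"
  "All \<phi> \<in> lang M \<longleftrightarrow> MAll \<in> M \<and> \<phi> \<in> lang M"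
  by (auto simp: lang_def Top_def)

lemma conj_list_in_lang [simp]: "conj_list \<phi>s \<in> lang M \<longleftrightarrow> set \<phi>s \<subseteq> lang M"
  by (induction \<phi>s) auto

lemma disj_list_in_lang [simp]: "disj_list \<phi>s \<in> lang M \<longleftrightarrow> set \<phi>s \<subseteq> lang M"
  by (induction \<phi>s) auto

definition succ_type :: "ltype \<Rightarrow> ltype" where
  "succ_type \<Phi> = ({\<phi>. Next \<phi> \<in> fst \<Phi>}, {\<phi>. Next \<phi> \<in> snd \<Phi>})"

lemma succ_type_mono: "leq_c \<Phi> \<Psi> \<Longrightarrow> leq_c (succ_type \<Phi>) (succ_type \<Psi>)"
  unfolding leq_c_def succ_type_def by auto

locale admissible_logic =
  fixes M :: "modality set" and \<Lambda> :: "form set"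
  assumes admissible: "admissible M \<Lambda>"
begin

lemma logic_in_lang: "\<Lambda> \<subseteq> lang M"
  and logic_mp: "\<phi> \<in> \<Lambda> \<Longrightarrow> Imp \<phi> \<psi> \<in> \<Lambda> \<Longrightarrow> \<psi> \<in> \<Lambda>"
  and logic_Next: "\<phi> \<in> \<Lambda> \<Longrightarrow> Next \<phi> \<in> \<Lambda>"
  and logic_Dia_mono: "MDia \<in> M \<Longrightarrow> Imp \<phi> \<psi> \<in> \<Lambda> \<Longrightarrow> Imp (Dia \<phi>) (Dia \<psi>) \<in> \<Lambda>"
  and logic_Dia_induct: "MDia \<in> M \<Longrightarrow> Imp (Next \<phi>) \<phi> \<in> \<Lambda> \<Longrightarrow> Imp (Dia \<phi>) \<phi> \<in> \<Lambda>"
  and ipl_axiom: "\<theta> \<in> ipl_axioms M \<Longrightarrow> \<theta> \<in> \<Lambda>"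
  and next_axiom: "\<theta> \<in> next_axioms M \<Longrightarrow> \<theta> \<in> \<Lambda>"
  and dia_axiom: "\<theta> \<in> dia_axioms M \<Longrightarrow> \<theta> \<in> \<Lambda>"
  and all_axiom: "\<theta> \<in> all_axioms M \<Longrightarrow> \<theta> \<in> \<Lambda>"
  using admissible unfolding admissible_def itl0_axioms_def by blast+

(* Hypotheses outside L_M are ignored, so every derivable formula lies in L_M. *)
inductive derivable :: "form set \<Rightarrow> form \<Rightarrow> bool" (infix "\<turnstile>" 55) for \<Gamma> where
  hyp: "\<phi> \<in> \<Gamma> \<Longrightarrow> \<phi> \<in> lang M \<Longrightarrow> \<Gamma> \<turnstile> \<phi>"
| logic: "\<phi> \<in> \<Lambda> \<Longrightarrow> \<Gamma> \<turnstile> \<phi>"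
| mp: "\<Gamma> \<turnstile> Imp \<phi> \<psi> \<Longrightarrow> \<Gamma> \<turnstile> \<phi> \<Longrightarrow> \<Gamma> \<turnstile> \<psi>"

lemma derivable_in_lang: "\<Gamma> \<turnstile> \<phi> \<Longrightarrow> \<phi> \<in> lang M"
  by (induction rule: derivable.induct) (use logic_in_lang in auto)

lemma derivable_empty_iff: "{} \<turnstile> \<phi> \<longleftrightarrow> \<phi> \<in> \<Lambda>"
proof
  show "{} \<turnstile> \<phi> \<Longrightarrow> \<phi> \<in> \<Lambda>"
    by (induction rule: derivable.induct) (auto intro: logic_mp)
qed (rule logic)

lemma derivable_mono: "\<Gamma> \<turnstile> \<phi> \<Longrightarrow> \<Gamma> \<subseteq> \<Delta> \<Longrightarrow> \<Delta> \<turnstile> \<phi>"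
  by (induction rule: derivable.induct) (auto intro: derivable.intros)

lemma derivable_trans: "\<Gamma> \<turnstile> \<phi> \<Longrightarrow> (\<And>\<psi>. \<psi> \<in> \<Gamma> \<Longrightarrow> \<psi> \<in> lang M \<Longrightarrow> \<Delta> \<turnstile> \<psi>) \<Longrightarrow> \<Delta> \<turnstile> \<phi>"
  by (induction rule: derivable.induct) (auto intro: derivable.intros)

lemma derivable_finite:
  "\<Gamma> \<turnstile> \<phi> \<Longrightarrow> \<exists>\<Gamma>\<^sub>0 \<subseteq> \<Gamma> \<inter> lang M. finite \<Gamma>\<^sub>0 \<and> \<Gamma>\<^sub>0 \<turnstile> \<phi>"
proof (induction rule: derivable.induct)
  case (hyp \<phi>)
  then show ?case by (intro exI[of _ "{\<phi>}"]) (auto intro: derivable.hyp)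
next
  case (logic \<phi>)
  then show ?case by (auto intro: derivable.logic)
next
  case (mp \<phi> \<psi>)
  then obtain \<Gamma>\<^sub>1 \<Gamma>\<^sub>2 where "\<Gamma>\<^sub>1 \<subseteq> \<Gamma> \<inter> lang M" "finite \<Gamma>\<^sub>1" "\<Gamma>\<^sub>1 \<turnstile> Imp \<phi> \<psi>"
    and "\<Gamma>\<^sub>2 \<subseteq> \<Gamma> \<inter> lang M" "finite \<Gamma>\<^sub>2" "\<Gamma>\<^sub>2 \<turnstile> \<phi>" by blast
  then show ?case
    by (intro exI[of _ "\<Gamma>\<^sub>1 \<union> \<Gamma>\<^sub>2"]) (auto intro: derivable.mp derivable_mono)
qed

lemma derivable_mp_logic: "Imp \<phi> \<psi> \<in> \<Lambda> \<Longrightarrow> \<Gamma> \<turnstile> \<phi> \<Longrightarrow> \<Gamma> \<turnstile> \<psi>"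
  by (meson derivable.logic derivable.mp)

lemma axiom_K: "\<phi> \<in> lang M \<Longrightarrow> \<psi> \<in> lang M \<Longrightarrow> Imp \<phi> (Imp \<psi> \<phi>) \<in> \<Lambda>"
  by (rule ipl_axiom) (auto simp: ipl_axioms_def)

lemma axiom_S: "\<phi> \<in> lang M \<Longrightarrow> \<psi> \<in> lang M \<Longrightarrow> \<chi> \<in> lang M \<Longrightarrow>
    Imp (Imp \<phi> (Imp \<psi> \<chi>)) (Imp (Imp \<phi> \<psi>) (Imp \<phi> \<chi>)) \<in> \<Lambda>"
  by (rule ipl_axiom) (auto simp: ipl_axioms_def)

lemma imp_refl: "\<phi> \<in> lang M \<Longrightarrow> Imp \<phi> \<phi> \<in> \<Lambda>"
  by (meson axiom_K axiom_S lang_simps(6) logic_mp)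

lemma derivable_insert_logic_imp:
  assumes "Imp \<phi> \<psi> \<in> \<Lambda>" shows "insert \<phi> \<Gamma> \<turnstile> \<psi>"
proof (rule derivable_mp_logic[OF assms])
  have "Imp \<phi> \<psi> \<in> lang M" using assms logic_in_lang by blast
  then show "insert \<phi> \<Gamma> \<turnstile> \<phi>" by (simp add: derivable.hyp)
qed

lemma derivable_impI_weak: "\<Gamma> \<turnstile> \<psi> \<Longrightarrow> \<phi> \<in> lang M \<Longrightarrow> \<Gamma> \<turnstile> Imp \<phi> \<psi>"
  by (meson axiom_K derivable_in_lang derivable_mp_logic)

lemma derivable_impI: "insert \<phi> \<Gamma> \<turnstile> \<psi> \<Longrightarrow> \<phi> \<in> lang M \<Longrightarrow> \<Gamma> \<turnstile> Imp \<phi> \<psi>"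
proof (induction rule: derivable.induct)
  case (hyp \<chi>)
  then show ?case
    by (cases "\<chi> = \<phi>") (auto intro: derivable.intros derivable_impI_weak imp_refl)
next
  case (logic \<chi>)
  then show ?case by (auto intro: derivable.logic derivable_impI_weak)
next
  case (mp \<chi> \<xi>)
  have "Imp (Imp \<phi> (Imp \<chi> \<xi>)) (Imp (Imp \<phi> \<chi>) (Imp \<phi> \<xi>)) \<in> \<Lambda>"
    using mp.hyps[THEN derivable_in_lang] mp.prems by (simp add: axiom_S)
  with mp show ?case by (meson derivable.mp derivable_mp_logic)
qed

lemma logic_imp_iff: "\<phi> \<in> lang M \<Longrightarrow> Imp \<phi> \<psi> \<in> \<Lambda> \<longleftrightarrow> {\<phi>} \<turnstile> \<psi>"
  by (metis derivable.hyp derivable_empty_iff derivable_impI derivable_mp_logic singletonI)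

lemma derivable_conjI:
  assumes "\<Gamma> \<turnstile> \<phi>" "\<Gamma> \<turnstile> \<psi>" shows "\<Gamma> \<turnstile> And \<phi> \<psi>"
proof -
  have "Imp \<phi> (Imp \<psi> (And \<phi> \<psi>)) \<in> \<Lambda>"
    using assms[THEN derivable_in_lang] by (intro ipl_axiom) (auto simp: ipl_axioms_def)
  with assms show ?thesis by (blast intro: derivable.mp derivable_mp_logic)
qed

lemma derivable_conjD1: assumes "\<Gamma> \<turnstile> And \<phi> \<psi>" shows "\<Gamma> \<turnstile> \<phi>"
proof (rule derivable_mp_logic[OF _ assms])
  show "Imp (And \<phi> \<psi>) \<phi> \<in> \<Lambda>"
    using derivable_in_lang[OF assms] by (intro ipl_axiom) (auto simp: ipl_axioms_def)
qed

lemma derivable_conjD2: assumes "\<Gamma> \<turnstile> And \<phi> \<psi>" shows "\<Gamma> \<turnstile> \<psi>"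
proof (rule derivable_mp_logic[OF _ assms])
  show "Imp (And \<phi> \<psi>) \<psi> \<in> \<Lambda>"
    using derivable_in_lang[OF assms] by (intro ipl_axiom) (auto simp: ipl_axioms_def)
qed

lemma derivable_disjI1: assumes "\<Gamma> \<turnstile> \<phi>" "\<psi> \<in> lang M" shows "\<Gamma> \<turnstile> Or \<phi> \<psi>"
proof (rule derivable_mp_logic[OF _ assms(1)])
  show "Imp \<phi> (Or \<phi> \<psi>) \<in> \<Lambda>"
    using derivable_in_lang[OF assms(1)] assms(2) by (intro ipl_axiom) (auto simp: ipl_axioms_def)
qed

lemma derivable_disjI2: assumes "\<Gamma> \<turnstile> \<psi>" "\<phi> \<in> lang M" shows "\<Gamma> \<turnstile> Or \<phi> \<psi>"
proof (rule derivable_mp_logic[OF _ assms(1)])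
  show "Imp \<psi> (Or \<phi> \<psi>) \<in> \<Lambda>"
    using derivable_in_lang[OF assms(1)] assms(2) by (intro ipl_axiom) (auto simp: ipl_axioms_def)
qed

lemma derivable_botE: assumes "\<Gamma> \<turnstile> Bot" "\<phi> \<in> lang M" shows "\<Gamma> \<turnstile> \<phi>"
proof (rule derivable_mp_logic[OF _ assms(1)])
  show "Imp Bot \<phi> \<in> \<Lambda>" using assms(2) by (intro ipl_axiom) (auto simp: ipl_axioms_def)
qed

lemma derivable_disjE:
  assumes "\<Gamma> \<turnstile> Or \<phi> \<psi>" "insert \<phi> \<Gamma> \<turnstile> \<chi>" "insert \<psi> \<Gamma> \<turnstile> \<chi>"
  shows "\<Gamma> \<turnstile> \<chi>"
proof -
  have in_lang: "\<phi> \<in> lang M" "\<psi> \<in> lang M" "\<chi> \<in> lang M"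
    using assms(1,2)[THEN derivable_in_lang] by auto
  then have "Imp (Imp \<phi> \<chi>) (Imp (Imp \<psi> \<chi>) (Imp (Or \<phi> \<psi>) \<chi>)) \<in> \<Lambda>"
    by (intro ipl_axiom) (auto simp: ipl_axioms_def)
  moreover have "\<Gamma> \<turnstile> Imp \<phi> \<chi>" "\<Gamma> \<turnstile> Imp \<psi> \<chi>"
    using assms(2,3) in_lang by (auto intro: derivable_impI)
  ultimately show ?thesis using assms(1) by (blast intro: derivable.mp derivable_mp_logic)
qed

lemma derivable_Top: "\<Gamma> \<turnstile> Top"
  unfolding Top_def by (simp add: derivable.logic imp_refl)

lemma derivable_conj_listI: "(\<And>\<phi>. \<phi> \<in> set \<phi>s \<Longrightarrow> \<Gamma> \<turnstile> \<phi>) \<Longrightarrow> \<Gamma> \<turnstile> conj_list \<phi>s"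
  by (induction \<phi>s) (auto intro: derivable_conjI derivable_Top)

lemma derivable_conj_listD: "\<Gamma> \<turnstile> conj_list \<phi>s \<Longrightarrow> \<phi> \<in> set \<phi>s \<Longrightarrow> \<Gamma> \<turnstile> \<phi>"
  by (induction \<phi>s) (auto dest: derivable_conjD1 derivable_conjD2)

lemma derivable_disj_listI:
  "\<Gamma> \<turnstile> \<phi> \<Longrightarrow> \<phi> \<in> set \<phi>s \<Longrightarrow> set \<phi>s \<subseteq> lang M \<Longrightarrow> \<Gamma> \<turnstile> disj_list \<phi>s"
  by (induction \<phi>s) (auto intro: derivable_disjI1 derivable_disjI2)

lemma derivable_disj_listE:
  "\<Gamma> \<turnstile> disj_list \<phi>s \<Longrightarrow> \<chi> \<in> lang M \<Longrightarrow> (\<And>\<phi>. \<phi> \<in> set \<phi>s \<Longrightarrow> insert \<phi> \<Gamma> \<turnstile> \<chi>) \<Longrightarrow> \<Gamma> \<turnstile> \<chi>"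
proof (induction \<phi>s arbitrary: \<Gamma>)
  case Nil
  then show ?case by (simp add: derivable_botE)
next
  case (Cons \<phi> \<phi>s)
  let ?\<Gamma>' = "insert (disj_list \<phi>s) \<Gamma>"
  have "set \<phi>s \<subseteq> lang M" using derivable_in_lang[OF Cons.prems(1)] by simp
  then have "?\<Gamma>' \<turnstile> disj_list \<phi>s" by (simp add: derivable.hyp)
  moreover have "insert \<psi> ?\<Gamma>' \<turnstile> \<chi>" if "\<psi> \<in> set \<phi>s" for \<psi>
  proof -
    have "insert \<psi> \<Gamma> \<turnstile> \<chi>" using Cons.prems(3) that by simp
    then show ?thesis by (rule derivable_mono) auto
  qed
  ultimately have "?\<Gamma>' \<turnstile> \<chi>" using Cons.IH Cons.prems(2) by blast
  with Cons.prems show ?case by (auto intro: derivable_disjE)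
qed

lemma derivable_disj_list_mono:
  "\<Gamma> \<turnstile> disj_list \<phi>s \<Longrightarrow> set \<phi>s \<subseteq> set \<psi>s \<Longrightarrow> set \<psi>s \<subseteq> lang M \<Longrightarrow> \<Gamma> \<turnstile> disj_list \<psi>s"
  by (erule derivable_disj_listE) (auto intro: derivable_disj_listI derivable.hyp)

lemma derives_iff: "derives \<Lambda> \<Gamma> \<Delta> \<longleftrightarrow> (\<exists>\<delta>s. set \<delta>s \<subseteq> \<Delta> \<and> \<Gamma> \<turnstile> disj_list \<delta>s)"
proof
  assume "derives \<Lambda> \<Gamma> \<Delta>"
  then obtain \<gamma>s \<delta>s where \<gamma>s: "set \<gamma>s \<subseteq> \<Gamma>" and \<delta>s: "set \<delta>s \<subseteq> \<Delta>"
    and imp: "Imp (conj_list \<gamma>s) (disj_list \<delta>s) \<in> \<Lambda>"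
    unfolding derives_def by blast
  have "Imp (conj_list \<gamma>s) (disj_list \<delta>s) \<in> lang M" using imp logic_in_lang by blast
  with \<gamma>s have "\<Gamma> \<turnstile> conj_list \<gamma>s"
    by (intro derivable_conj_listI derivable.hyp) auto
  then have "\<Gamma> \<turnstile> disj_list \<delta>s" by (rule derivable_mp_logic[OF imp])
  with \<delta>s show "\<exists>\<delta>s. set \<delta>s \<subseteq> \<Delta> \<and> \<Gamma> \<turnstile> disj_list \<delta>s" by blast
next
  assume "\<exists>\<delta>s. set \<delta>s \<subseteq> \<Delta> \<and> \<Gamma> \<turnstile> disj_list \<delta>s"
  then obtain \<delta>s where \<delta>s: "set \<delta>s \<subseteq> \<Delta>" "\<Gamma> \<turnstile> disj_list \<delta>s" by blast
  obtain \<Gamma>\<^sub>0 where \<Gamma>\<^sub>0: "\<Gamma>\<^sub>0 \<subseteq> \<Gamma> \<inter> lang M" "finite \<Gamma>\<^sub>0" "\<Gamma>\<^sub>0 \<turnstile> disj_list \<delta>s"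
    using derivable_finite[OF \<delta>s(2)] by blast
  obtain \<gamma>s where \<gamma>s: "set \<gamma>s = \<Gamma>\<^sub>0" using finite_list \<Gamma>\<^sub>0(2) by blast
  have "{conj_list \<gamma>s} \<turnstile> \<gamma>" if "\<gamma> \<in> \<Gamma>\<^sub>0" for \<gamma>
  proof (rule derivable_conj_listD)
    show "{conj_list \<gamma>s} \<turnstile> conj_list \<gamma>s" using \<Gamma>\<^sub>0(1) \<gamma>s by (intro derivable.hyp) auto
    show "\<gamma> \<in> set \<gamma>s" using \<gamma>s that by simp
  qed
  with \<Gamma>\<^sub>0(3) have "{conj_list \<gamma>s} \<turnstile> disj_list \<delta>s" by (rule derivable_trans)
  then have "Imp (conj_list \<gamma>s) (disj_list \<delta>s) \<in> \<Lambda>"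
    using \<Gamma>\<^sub>0(1) \<gamma>s by (subst logic_imp_iff) auto
  then show "derives \<Lambda> \<Gamma> \<Delta>"
    unfolding derives_def using \<Gamma>\<^sub>0(1) \<gamma>s \<delta>s(1) by blast
qed

lemma derivable_Next: "\<Gamma> \<turnstile> \<phi> \<Longrightarrow> Next ` \<Gamma> \<turnstile> Next \<phi>"
proof (induction rule: derivable.induct)
  case (hyp \<phi>)
  then show ?case by (simp add: derivable.hyp)
next
  case (logic \<phi>)
  then show ?case by (simp add: derivable.logic logic_Next)
next
  case (mp \<phi> \<psi>)
  have "Imp (Next (Imp \<phi> \<psi>)) (Imp (Next \<phi>) (Next \<psi>)) \<in> \<Lambda>"
    using mp.hyps(1)[THEN derivable_in_lang] by (intro next_axiom) (auto simp: next_axioms_def)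
  with mp.IH show ?case by (meson derivable.mp derivable_mp_logic)
qed

lemma derivable_Next_botD: "\<Gamma> \<turnstile> Next Bot \<Longrightarrow> \<Gamma> \<turnstile> Bot"
proof (erule derivable_mp_logic[rotated])
  have "Bot \<in> lang M" by simp
  then show "Imp (Next Bot) Bot \<in> \<Lambda>"
    by (intro next_axiom, unfold next_axioms_def Neg_def) blast
qed

lemma derivable_Next_disjD: assumes "\<Gamma> \<turnstile> Next (Or \<phi> \<psi>)" shows "\<Gamma> \<turnstile> Or (Next \<phi>) (Next \<psi>)"
proof (rule derivable_mp_logic[OF _ assms])
  show "Imp (Next (Or \<phi> \<psi>)) (Or (Next \<phi>) (Next \<psi>)) \<in> \<Lambda>"
    using derivable_in_lang[OF assms] by (intro next_axiom) (auto simp: next_axioms_def)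
qed

lemma derivable_Next_disj_listD: "\<Gamma> \<turnstile> Next (disj_list \<phi>s) \<Longrightarrow> \<Gamma> \<turnstile> disj_list (map Next \<phi>s)"
proof (induction \<phi>s arbitrary: \<Gamma>)
  case Nil
  then show ?case by (simp add: derivable_Next_botD)
next
  case (Cons \<phi> \<phi>s)
  have in_lang: "\<phi> \<in> lang M" "set \<phi>s \<subseteq> lang M"
    using derivable_in_lang[OF Cons.prems] by auto
  have "\<Gamma> \<turnstile> Or (Next \<phi>) (Next (disj_list \<phi>s))"
    using Cons.prems by (simp add: derivable_Next_disjD)
  moreover have "insert (Next \<phi>) \<Gamma> \<turnstile> disj_list (map Next (\<phi> # \<phi>s))"
    using in_lang by (intro derivable_disj_listI[of _ "Next \<phi>"] derivable.hyp) auto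
  moreover have "insert (Next (disj_list \<phi>s)) \<Gamma> \<turnstile> Next (disj_list \<phi>s)"
    using in_lang by (intro derivable.hyp) auto
  then have "insert (Next (disj_list \<phi>s)) \<Gamma> \<turnstile> disj_list (map Next (\<phi> # \<phi>s))"
    using in_lang by (auto intro: derivable_disjI2 Cons.IH)
  ultimately show ?case by (rule derivable_disjE)
qed

lemma derivable_Next_disj_listI:
  assumes "\<Gamma> \<turnstile> disj_list (map Next \<phi>s)" shows "\<Gamma> \<turnstile> Next (disj_list \<phi>s)"
proof (rule derivable_disj_listE[OF assms])
  have in_lang: "set \<phi>s \<subseteq> lang M" using derivable_in_lang[OF assms] by auto
  then show "Next (disj_list \<phi>s) \<in> lang M" by simp
  fix \<psi> assume "\<psi> \<in> set (map Next \<phi>s)"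
  then obtain \<phi> where \<phi>: "\<psi> = Next \<phi>" "\<phi> \<in> set \<phi>s" by auto
  then have "{\<phi>} \<turnstile> disj_list \<phi>s"
    using in_lang by (intro derivable_disj_listI[of _ \<phi>] derivable.hyp) auto
  then have "{Next \<phi>} \<turnstile> Next (disj_list \<phi>s)" using derivable_Next[of "{\<phi>}"] by simp
  then show "insert \<psi> \<Gamma> \<turnstile> Next (disj_list \<phi>s)" by (rule derivable_mono) (simp add: \<phi>(1))
qed

lemma logic_imp_trans: "Imp \<phi> \<psi> \<in> \<Lambda> \<Longrightarrow> Imp \<psi> \<chi> \<in> \<Lambda> \<Longrightarrow> Imp \<phi> \<chi> \<in> \<Lambda>"
  by (meson derivable_in_lang derivable_mp_logic lang_simps(6) logic_imp_iff logic_in_lang subsetD)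

lemma logic_Next_mono: "Imp \<phi> \<psi> \<in> \<Lambda> \<Longrightarrow> Imp (Next \<phi>) (Next \<psi>) \<in> \<Lambda>"
proof -
  assume imp: "Imp \<phi> \<psi> \<in> \<Lambda>"
  then have "\<phi> \<in> lang M" using logic_in_lang by auto
  with imp have "{\<phi>} \<turnstile> \<psi>" by (simp add: logic_imp_iff)
  then have "{Next \<phi>} \<turnstile> Next \<psi>" using derivable_Next[of "{\<phi>}"] by simp
  with \<open>\<phi> \<in> lang M\<close> show ?thesis by (simp add: logic_imp_iff)
qed

lemma derives_common_formula: "\<phi> \<in> \<Gamma> \<Longrightarrow> \<phi> \<in> \<Delta> \<Longrightarrow> \<phi> \<in> lang M \<Longrightarrow> derives \<Lambda> \<Gamma> \<Delta>"
  unfolding derives_iff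
  by (intro exI[of _ "[\<phi>]"]) (auto intro: derivable_disjI1 derivable.hyp)

lemma prime_type_consistent:
  "prime_type M \<Lambda> \<Phi> \<Longrightarrow> set \<delta>s \<subseteq> snd \<Phi> \<Longrightarrow> \<not> fst \<Phi> \<turnstile> disj_list \<delta>s"
  unfolding prime_type_def derives_iff by blast

lemma prime_type_snd_eq: "prime_type M \<Lambda> \<Phi> \<Longrightarrow> snd \<Phi> = lang M - fst \<Phi>"
  unfolding prime_type_def using derives_common_formula by blast

lemma prime_type_closed:
  assumes \<Phi>: "prime_type M \<Lambda> \<Phi>" and "fst \<Phi> \<turnstile> \<phi>" shows "\<phi> \<in> fst \<Phi>"
proof (rule ccontr)
  assume "\<phi> \<notin> fst \<Phi>"
  with assms have "\<phi> \<in> snd \<Phi>" by (simp add: prime_type_snd_eq derivable_in_lang)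
  moreover have "fst \<Phi> \<turnstile> disj_list [\<phi>]" using assms(2) by (simp add: derivable_disjI1)
  ultimately show False using prime_type_consistent[OF \<Phi>, of "[\<phi>]"] by simp
qed

lemma prime_type_logic_imp:
  "prime_type M \<Lambda> \<Phi> \<Longrightarrow> \<phi> \<in> fst \<Phi> \<Longrightarrow> Imp \<phi> \<psi> \<in> \<Lambda> \<Longrightarrow> \<psi> \<in> fst \<Phi>"
  by (metis derivable.hyp derivable_mp_logic prime_type_closed prime_type_def subsetD)

lemma prime_type_disjD:
  assumes \<Phi>: "prime_type M \<Lambda> \<Phi>" and "Or \<phi> \<psi> \<in> fst \<Phi>"
  shows "\<phi> \<in> fst \<Phi> \<or> \<psi> \<in> fst \<Phi>"
proof (rule ccontr)
  have in_lang: "\<phi> \<in> lang M" "\<psi> \<in> lang M" using assms by (auto simp: prime_type_def)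
  assume "\<not> (\<phi> \<in> fst \<Phi> \<or> \<psi> \<in> fst \<Phi>)"
  with in_lang have "set [\<phi>, \<psi>] \<subseteq> snd \<Phi>" by (simp add: prime_type_snd_eq[OF \<Phi>])
  moreover have "fst \<Phi> \<turnstile> disj_list [\<phi>, \<psi>]"
  proof (rule derivable_disjE)
    show "fst \<Phi> \<turnstile> Or \<phi> \<psi>" using assms(2) in_lang by (simp add: derivable.hyp)
    show "insert \<phi> (fst \<Phi>) \<turnstile> disj_list [\<phi>, \<psi>]"
      using in_lang by (intro derivable_disj_listI[of _ \<phi>] derivable.hyp) auto
    show "insert \<psi> (fst \<Phi>) \<turnstile> disj_list [\<phi>, \<psi>]"
      using in_lang by (intro derivable_disj_listI[of _ \<psi>] derivable.hyp) auto
  qed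
  ultimately show False using prime_type_consistent[OF \<Phi>] by blast
qed

lemma prime_type_eqI:
  "prime_type M \<Lambda> \<Phi> \<Longrightarrow> prime_type M \<Lambda> \<Psi> \<Longrightarrow> fst \<Phi> = fst \<Psi> \<Longrightarrow> \<Phi> = \<Psi>"
  by (simp add: prime_type_snd_eq prod_eq_iff)

lemma leq_c_prime_type_iff:
  "prime_type M \<Lambda> \<Phi> \<Longrightarrow> prime_type M \<Lambda> \<Psi> \<Longrightarrow> leq_c \<Phi> \<Psi> \<longleftrightarrow> fst \<Phi> \<subseteq> fst \<Psi>"
  by (auto simp: leq_c_def prime_type_snd_eq)

lemma maximal_prime_type:
  assumes "\<Gamma> \<subseteq> lang M" "\<not> derives \<Lambda> \<Gamma> \<Delta>"
    and maximal: "\<And>\<phi>. \<phi> \<in> lang M \<Longrightarrow> \<phi> \<notin> \<Gamma> \<Longrightarrow> derives \<Lambda> (insert \<phi> \<Gamma>) \<Delta>"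
  shows "prime_type M \<Lambda> (\<Gamma>, lang M - \<Gamma>)"
proof -
  have "\<not> \<Gamma> \<turnstile> disj_list \<phi>s" if \<phi>s: "set \<phi>s \<subseteq> lang M - \<Gamma>" for \<phi>s
  proof
    assume \<Gamma>: "\<Gamma> \<turnstile> disj_list \<phi>s"
    have "\<forall>\<phi>\<in>set \<phi>s. \<exists>\<delta>s. set \<delta>s \<subseteq> \<Delta> \<and> insert \<phi> \<Gamma> \<turnstile> disj_list \<delta>s"
      using maximal \<phi>s unfolding derives_iff by blast
    then obtain \<delta>s where \<delta>s: "\<And>\<phi>. \<phi> \<in> set \<phi>s \<Longrightarrow> set (\<delta>s \<phi>) \<subseteq> \<Delta> \<and> insert \<phi> \<Gamma> \<turnstile> disj_list (\<delta>s \<phi>)"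
      by (metis bchoice)
    let ?\<delta>s = "concat (map \<delta>s \<phi>s)"
    have "set ?\<delta>s \<subseteq> lang M" using \<delta>s[THEN conjunct2, THEN derivable_in_lang] by auto
    have "\<Gamma> \<turnstile> disj_list ?\<delta>s"
    proof (rule derivable_disj_listE[OF \<Gamma>])
      show "disj_list ?\<delta>s \<in> lang M" using \<open>set ?\<delta>s \<subseteq> lang M\<close> by simp
      fix \<phi> assume \<phi>: "\<phi> \<in> set \<phi>s"
      then have "set (\<delta>s \<phi>) \<subseteq> set ?\<delta>s" by auto
      with \<delta>s[OF \<phi>] \<open>set ?\<delta>s \<subseteq> lang M\<close> show "insert \<phi> \<Gamma> \<turnstile> disj_list ?\<delta>s"
        using derivable_disj_list_mono by blast
    qed
    moreover have "set ?\<delta>s \<subseteq> \<Delta>" using \<delta>s by auto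
    ultimately show False using assms(2) unfolding derives_iff by blast
  qed
  then have "\<not> derives \<Lambda> \<Gamma> (lang M - \<Gamma>)" unfolding derives_iff by blast
  with assms(1) show ?thesis unfolding prime_type_def by auto
qed

lemma derives_Union_chain:
  assumes "derives \<Lambda> (\<Union>\<C>) \<Delta>" "\<C> \<noteq> {}" "subset.chain \<A> \<C>"
  shows "\<exists>B\<in>\<C>. derives \<Lambda> B \<Delta>"
proof -
  obtain \<gamma>s \<delta>s where \<gamma>s: "set \<gamma>s \<subseteq> \<Union>\<C>"
    and "set \<delta>s \<subseteq> \<Delta>" "Imp (conj_list \<gamma>s) (disj_list \<delta>s) \<in> \<Lambda>"
    using assms(1) unfolding derives_def by blast
  moreover obtain B where "B \<in> \<C>" "set \<gamma>s \<subseteq> B"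
    using finite_subset_Union_chain[OF _ \<gamma>s assms(2,3)] by blast
  ultimately show ?thesis unfolding derives_def by blast
qed

lemma prime_type_extension:
  assumes "\<Gamma> \<subseteq> lang M" "\<Delta> \<subseteq> lang M" "\<not> derives \<Lambda> \<Gamma> \<Delta>"
  shows "\<exists>\<Theta>. prime_type M \<Lambda> \<Theta> \<and> \<Gamma> \<subseteq> fst \<Theta> \<and> \<Delta> \<subseteq> snd \<Theta>"
proof -
  define \<A> where "\<A> = {\<Gamma>'. \<Gamma> \<subseteq> \<Gamma>' \<and> \<Gamma>' \<subseteq> lang M \<and> \<not> derives \<Lambda> \<Gamma>' \<Delta>}"
  have "\<exists>\<Gamma>'\<in>\<A>. \<forall>X\<in>\<A>. \<Gamma>' \<subseteq> X \<longrightarrow> X = \<Gamma>'"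
  proof (rule subset_Zorn_nonempty)
    show "\<A> \<noteq> {}" using assms unfolding \<A>_def by blast
  next
    fix \<C> assume \<C>: "\<C> \<noteq> {}" "subset.chain \<A> \<C>"
    then have "\<not> derives \<Lambda> (\<Union>\<C>) \<Delta>"
      using derives_Union_chain unfolding \<A>_def subset_chain_def by blast
    with \<C> show "\<Union>\<C> \<in> \<A>" unfolding \<A>_def subset_chain_def by blast
  qed
  then obtain \<Gamma>' where \<Gamma>': "\<Gamma>' \<in> \<A>" and maximal: "\<And>X. X \<in> \<A> \<Longrightarrow> \<Gamma>' \<subseteq> X \<Longrightarrow> X = \<Gamma>'"
    by blast
  have "prime_type M \<Lambda> (\<Gamma>', lang M - \<Gamma>')"
  proof (rule maximal_prime_type)
    show "\<Gamma>' \<subseteq> lang M" "\<not> derives \<Lambda> \<Gamma>' \<Delta>" using \<Gamma>' unfolding \<A>_def by blast+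
    fix \<phi> assume "\<phi> \<in> lang M" "\<phi> \<notin> \<Gamma>'"
    then have "insert \<phi> \<Gamma>' \<notin> \<A>" using maximal by blast
    with \<Gamma>' \<open>\<phi> \<in> lang M\<close> show "derives \<Lambda> (insert \<phi> \<Gamma>') \<Delta>" unfolding \<A>_def by blast
  qed
  moreover have "\<Delta> \<subseteq> lang M - \<Gamma>'"
    using \<Gamma>' assms(2) derives_common_formula unfolding \<A>_def by blast
  ultimately show ?thesis using \<Gamma>' unfolding \<A>_def by (intro exI[of _ "(\<Gamma>', lang M - \<Gamma>')"]) auto
qed

lemma imp_Dia: "MDia \<in> M \<Longrightarrow> \<phi> \<in> lang M \<Longrightarrow> Imp \<phi> (Dia \<phi>) \<in> \<Lambda>"
  and Next_Dia_imp_Dia: "MDia \<in> M \<Longrightarrow> \<phi> \<in> lang M \<Longrightarrow> Imp (Next (Dia \<phi>)) (Dia \<phi>) \<in> \<Lambda>"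
proof -
  assume "MDia \<in> M" "\<phi> \<in> lang M"
  then have "Imp (Or \<phi> (Next (Dia \<phi>))) (Dia \<phi>) \<in> \<Lambda>"
    by (intro dia_axiom) (auto simp: dia_axioms_def)
  moreover have "Imp \<phi> (Or \<phi> (Next (Dia \<phi>))) \<in> \<Lambda>" "Imp (Next (Dia \<phi>)) (Or \<phi> (Next (Dia \<phi>))) \<in> \<Lambda>"
    using \<open>MDia \<in> M\<close> \<open>\<phi> \<in> lang M\<close>
    by (simp_all add: logic_imp_iff derivable_disjI1 derivable_disjI2 derivable.hyp)
  ultimately show "Imp \<phi> (Dia \<phi>) \<in> \<Lambda>" "Imp (Next (Dia \<phi>)) (Dia \<phi>) \<in> \<Lambda>"
    by (blast intro: logic_imp_trans)+
qed

lemma Dia_unfold: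
  assumes "MDia \<in> M" "\<phi> \<in> lang M"
  shows "Imp (Dia \<phi>) (Or \<phi> (Next (Dia \<phi>))) \<in> \<Lambda>"
proof -
  let ?\<chi> = "Or \<phi> (Next (Dia \<phi>))"
  have "{Next ?\<chi>} \<turnstile> ?\<chi>"
  proof (rule derivable_disjE)
    show "{Next ?\<chi>} \<turnstile> Or (Next \<phi>) (Next (Next (Dia \<phi>)))"
      using assms by (intro derivable_Next_disjD derivable.hyp) auto
    have "Imp (Next \<phi>) (Next (Dia \<phi>)) \<in> \<Lambda>" "Imp (Next (Next (Dia \<phi>))) (Next (Dia \<phi>)) \<in> \<Lambda>"
      using assms by (simp_all add: logic_Next_mono imp_Dia Next_Dia_imp_Dia)
    then show "insert (Next \<phi>) {Next ?\<chi>} \<turnstile> ?\<chi>" "insert (Next (Next (Dia \<phi>))) {Next ?\<chi>} \<turnstile> ?\<chi>"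
      using assms(2) by (auto intro: derivable_disjI2 derivable_insert_logic_imp)
  qed
  then have "Imp (Dia ?\<chi>) ?\<chi> \<in> \<Lambda>"
    using assms by (intro logic_Dia_induct) (simp_all add: logic_imp_iff)
  moreover have "Imp (Dia \<phi>) (Dia ?\<chi>) \<in> \<Lambda>"
    using assms by (intro logic_Dia_mono) (simp_all add: logic_imp_iff derivable_disjI1 derivable.hyp)
  ultimately show ?thesis by (rule logic_imp_trans[rotated])
qed

lemma All_imp_Next_All: "MAll \<in> M \<Longrightarrow> \<phi> \<in> lang M \<Longrightarrow> Imp (All \<phi>) (Next (All \<phi>)) \<in> \<Lambda>"
  and Next_All_imp_All: "MAll \<in> M \<Longrightarrow> \<phi> \<in> lang M \<Longrightarrow> Imp (Next (All \<phi>)) (All \<phi>) \<in> \<Lambda>"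
proof -
  assume "MAll \<in> M" "\<phi> \<in> lang M"
  then have "{} \<turnstile> Iff (All \<phi>) (Next (All \<phi>))"
    by (intro derivable.logic all_axiom) (auto simp: all_axioms_def)
  then have "{} \<turnstile> Imp (All \<phi>) (Next (All \<phi>))" "{} \<turnstile> Imp (Next (All \<phi>)) (All \<phi>)"
    unfolding Iff_def by (auto dest: derivable_conjD1 derivable_conjD2)
  then show "Imp (All \<phi>) (Next (All \<phi>)) \<in> \<Lambda>" "Imp (Next (All \<phi>)) (All \<phi>) \<in> \<Lambda>"
    by (simp_all add: derivable_empty_iff)
qed

lemma succ_type_prime:
  assumes \<Phi>: "prime_type M \<Lambda> \<Phi>" shows "prime_type M \<Lambda> (succ_type \<Phi>)"
proof -
  have "\<not> fst (succ_type \<Phi>) \<turnstile> disj_list \<delta>s" if \<delta>s: "set \<delta>s \<subseteq> snd (succ_type \<Phi>)" for \<delta>s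
  proof
    assume "fst (succ_type \<Phi>) \<turnstile> disj_list \<delta>s"
    then have "Next ` fst (succ_type \<Phi>) \<turnstile> disj_list (map Next \<delta>s)"
      by (intro derivable_Next_disj_listD derivable_Next)
    then have "fst \<Phi> \<turnstile> disj_list (map Next \<delta>s)"
      by (rule derivable_mono) (auto simp: succ_type_def)
    moreover have "set (map Next \<delta>s) \<subseteq> snd \<Phi>" using \<delta>s by (auto simp: succ_type_def)
    ultimately show False using prime_type_consistent[OF \<Phi>] by blast
  qed
  moreover have "fst (succ_type \<Phi>) \<union> snd (succ_type \<Phi>) = lang M"
    using \<Phi> by (auto simp: succ_type_def prime_type_def)
  ultimately show ?thesis unfolding prime_type_def derives_iff by auto
qed

lemma sensible_succ_type:
  assumes \<Phi>: "prime_type M \<Lambda> \<Phi>" shows "sensible \<Phi> (succ_type \<Phi>)"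
proof -
  have in_lang: "\<phi> \<in> lang M" if "\<phi> \<in> fst \<Phi> \<or> \<phi> \<in> snd \<Phi>" for \<phi>
    using \<Phi> that by (auto simp: prime_type_def)
  have "\<phi> \<in> fst \<Phi> \<or> Next (Dia \<phi>) \<in> fst \<Phi>" if "Dia \<phi> \<in> fst \<Phi>" for \<phi>
  proof (rule prime_type_disjD[OF \<Phi>])
    show "Or \<phi> (Next (Dia \<phi>)) \<in> fst \<Phi>"
      using in_lang[of "Dia \<phi>"] that by (auto intro: prime_type_logic_imp[OF \<Phi> that Dia_unfold])
  qed
  moreover have "Next (Dia \<phi>) \<in> snd \<Phi>" if "Dia \<phi> \<in> snd \<Phi>" for \<phi>
    using in_lang[of "Dia \<phi>"] that prime_type_logic_imp[OF \<Phi> _ Next_Dia_imp_Dia]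
    by (auto simp: prime_type_snd_eq[OF \<Phi>])
  moreover have All_iff: "All \<phi> \<in> fst \<Phi> \<longleftrightarrow> Next (All \<phi>) \<in> fst \<Phi>" for \<phi>
    using in_lang[of "All \<phi>"] in_lang[of "Next (All \<phi>)"]
      prime_type_logic_imp[OF \<Phi> _ All_imp_Next_All] prime_type_logic_imp[OF \<Phi> _ Next_All_imp_All]
    by auto
  moreover have "All \<phi> \<in> snd \<Phi> \<longleftrightarrow> Next (All \<phi>) \<in> snd \<Phi>" for \<phi>
    using All_iff by (auto simp: prime_type_snd_eq[OF \<Phi>])
  ultimately show ?thesis unfolding sensible_def succ_type_def by simp
qed

lemma Sc_iff: "(\<Phi>, \<Psi>) \<in> Sc M \<Lambda> \<longleftrightarrow> prime_type M \<Lambda> \<Phi> \<and> \<Psi> = succ_type \<Phi>"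
proof
  assume "(\<Phi>, \<Psi>) \<in> Sc M \<Lambda>"
  then have \<Phi>: "prime_type M \<Lambda> \<Phi>" and \<Psi>: "prime_type M \<Lambda> \<Psi>" and "sensible \<Phi> \<Psi>"
    unfolding Sc_def Wc_def by auto
  then have "fst (succ_type \<Phi>) \<subseteq> fst \<Psi>" "snd (succ_type \<Phi>) \<subseteq> snd \<Psi>"
    unfolding sensible_def succ_type_def by auto
  moreover have "fst \<Psi> \<subseteq> lang M" using \<Psi> by (simp add: prime_type_def)
  ultimately have "\<Psi> = succ_type \<Phi>"
    using \<Psi> succ_type_prime[OF \<Phi>] by (intro prime_type_eqI) (auto simp: prime_type_snd_eq)
  with \<Phi> show "prime_type M \<Lambda> \<Phi> \<and> \<Psi> = succ_type \<Phi>" by blast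
qed (auto simp: Sc_def Wc_def succ_type_prime sensible_succ_type)

lemma derivable_merge_Next_hyps:
  assumes "\<Gamma> \<union> Next ` X \<turnstile> \<phi>"
  shows "\<exists>\<alpha>s. set \<alpha>s \<subseteq> X \<and> insert (Next (conj_list \<alpha>s)) \<Gamma> \<turnstile> \<phi>"
proof -
  obtain \<Gamma>\<^sub>0 where \<Gamma>\<^sub>0: "\<Gamma>\<^sub>0 \<subseteq> (\<Gamma> \<union> Next ` X) \<inter> lang M" "finite \<Gamma>\<^sub>0" "\<Gamma>\<^sub>0 \<turnstile> \<phi>"
    using derivable_finite[OF assms] by blast
  have "finite (X \<inter> Next -` \<Gamma>\<^sub>0)"
    using \<Gamma>\<^sub>0(2) by (intro finite_Int disjI2 finite_vimageI) (simp_all add: inj_def)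
  then obtain \<alpha>s where \<alpha>s: "set \<alpha>s = X \<inter> Next -` \<Gamma>\<^sub>0"
    by (meson finite_list)
  let ?\<alpha> = "conj_list \<alpha>s"
  have "?\<alpha> \<in> lang M" using \<alpha>s \<Gamma>\<^sub>0(1) by auto
  have "insert (Next ?\<alpha>) \<Gamma> \<turnstile> \<gamma>" if "\<gamma> \<in> \<Gamma>\<^sub>0" for \<gamma>
  proof (cases "\<gamma> \<in> \<Gamma>")
    case True
    then show ?thesis using \<Gamma>\<^sub>0(1) that by (auto intro: derivable.hyp)
  next
    case False
    with \<Gamma>\<^sub>0(1) that obtain \<psi> where \<psi>: "\<gamma> = Next \<psi>" "\<psi> \<in> set \<alpha>s" using \<alpha>s by auto
    have "{?\<alpha>} \<turnstile> ?\<alpha>" using \<open>?\<alpha> \<in> lang M\<close> by (simp add: derivable.hyp)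
    then have "{?\<alpha>} \<turnstile> \<psi>" using \<psi>(2) by (rule derivable_conj_listD)
    then have "{Next ?\<alpha>} \<turnstile> \<gamma>" using derivable_Next[of "{?\<alpha>}"] \<psi>(1) by simp
    then show ?thesis by (rule derivable_mono) blast
  qed
  with \<Gamma>\<^sub>0(3) have "insert (Next ?\<alpha>) \<Gamma> \<turnstile> \<phi>" by (rule derivable_trans)
  with \<alpha>s show ?thesis by blast
qed

(* A derivation of Next delta from Phi+ and Next alpha, with alpha the conjunction of the
   Psi+ hypotheses used, yields Next (alpha --> delta) in Phi+ by the converse K axiom. *)
lemma succ_type_open_consistent:
  assumes Next_imp_axiom: "\<And>\<phi> \<psi>. \<phi> \<in> lang M \<Longrightarrow> \<psi> \<in> lang M \<Longrightarrow>
      Imp (Imp (Next \<phi>) (Next \<psi>)) (Next (Imp \<phi> \<psi>)) \<in> \<Lambda>"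
    and \<Phi>: "prime_type M \<Lambda> \<Phi>" and \<Psi>: "prime_type M \<Lambda> \<Psi>"
    and succ_le: "fst (succ_type \<Phi>) \<subseteq> fst \<Psi>"
  shows "\<not> derives \<Lambda> (fst \<Phi> \<union> Next ` fst \<Psi>) (Next ` snd \<Psi>)"
proof
  assume "derives \<Lambda> (fst \<Phi> \<union> Next ` fst \<Psi>) (Next ` snd \<Psi>)"
  then obtain \<delta>s where \<delta>s: "\<delta>s \<in> lists (Next ` snd \<Psi>)"
    and "fst \<Phi> \<union> Next ` fst \<Psi> \<turnstile> disj_list \<delta>s"
    unfolding derives_iff in_lists_conv_set by blast
  moreover obtain \<psi>s where "\<delta>s = map Next \<psi>s" and \<psi>s: "set \<psi>s \<subseteq> snd \<Psi>"
    using \<delta>s unfolding lists_image by auto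
  ultimately have "fst \<Phi> \<union> Next ` fst \<Psi> \<turnstile> disj_list (map Next \<psi>s)" by simp
  then obtain \<alpha>s where \<alpha>s: "set \<alpha>s \<subseteq> fst \<Psi>"
    and "insert (Next (conj_list \<alpha>s)) (fst \<Phi>) \<turnstile> disj_list (map Next \<psi>s)"
    using derivable_merge_Next_hyps by blast
  let ?\<alpha> = "conj_list \<alpha>s" and ?\<delta> = "disj_list \<psi>s"
  have in_lang: "?\<alpha> \<in> lang M" "?\<delta> \<in> lang M"
    using \<alpha>s \<psi>s \<Psi> by (auto simp: prime_type_def)
  have "insert (Next ?\<alpha>) (fst \<Phi>) \<turnstile> Next ?\<delta>"
    by (rule derivable_Next_disj_listI) fact
  then have "fst \<Phi> \<turnstile> Imp (Next ?\<alpha>) (Next ?\<delta>)" using in_lang by (simp add: derivable_impI)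
  then have "fst \<Phi> \<turnstile> Next (Imp ?\<alpha> ?\<delta>)" by (rule derivable_mp_logic[OF Next_imp_axiom[OF in_lang]])
  then have "Imp ?\<alpha> ?\<delta> \<in> fst \<Psi>"
    using prime_type_closed[OF \<Phi>] succ_le by (auto simp: succ_type_def)
  then have "fst \<Psi> \<turnstile> Imp ?\<alpha> ?\<delta>" using in_lang by (simp add: derivable.hyp)
  moreover have "fst \<Psi> \<turnstile> ?\<alpha>" using \<alpha>s \<Psi>
    by (intro derivable_conj_listI derivable.hyp) (auto simp: prime_type_def)
  ultimately have "fst \<Psi> \<turnstile> ?\<delta>" by (rule derivable.mp)
  with \<psi>s show False using prime_type_consistent[OF \<Psi>] by blast
qed

lemma succ_type_open:
  assumes Next_imp_axiom: "\<And>\<phi> \<psi>. \<phi> \<in> lang M \<Longrightarrow> \<psi> \<in> lang M \<Longrightarrow>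
      Imp (Imp (Next \<phi>) (Next \<psi>)) (Next (Imp \<phi> \<psi>)) \<in> \<Lambda>"
    and \<Phi>: "prime_type M \<Lambda> \<Phi>" and \<Psi>: "prime_type M \<Lambda> \<Psi>"
    and succ_le: "leq_c (succ_type \<Phi>) \<Psi>"
  shows "\<exists>\<Theta>. prime_type M \<Lambda> \<Theta> \<and> leq_c \<Phi> \<Theta> \<and> succ_type \<Theta> = \<Psi>"
proof -
  have "fst (succ_type \<Phi>) \<subseteq> fst \<Psi>" using succ_le by (simp add: leq_c_def)
  with assms have "\<not> derives \<Lambda> (fst \<Phi> \<union> Next ` fst \<Psi>) (Next ` snd \<Psi>)"
    by (intro succ_type_open_consistent)
  moreover have "fst \<Phi> \<union> Next ` fst \<Psi> \<subseteq> lang M" "Next ` snd \<Psi> \<subseteq> lang M"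
    using \<Phi> \<Psi> by (auto simp: prime_type_def)
  ultimately obtain \<Theta> where \<Theta>: "prime_type M \<Lambda> \<Theta>"
    and \<Theta>_fst: "fst \<Phi> \<union> Next ` fst \<Psi> \<subseteq> fst \<Theta>" and \<Theta>_snd: "Next ` snd \<Psi> \<subseteq> snd \<Theta>"
    using prime_type_extension[of "fst \<Phi> \<union> Next ` fst \<Psi>" "Next ` snd \<Psi>"] by blast
  have "fst (succ_type \<Theta>) = fst \<Psi>"
  proof (intro set_eqI iffI)
    fix \<phi> assume "\<phi> \<in> fst (succ_type \<Theta>)"
    then have "Next \<phi> \<in> fst \<Theta>" by (simp add: succ_type_def)
    then have "\<phi> \<in> lang M" "Next \<phi> \<notin> snd \<Theta>"
      using \<Theta> by (auto simp: prime_type_def prime_type_snd_eq[OF \<Theta>])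
    then show "\<phi> \<in> fst \<Psi>" using \<Theta>_snd by (auto simp: prime_type_snd_eq[OF \<Psi>])
  next
    fix \<phi> assume "\<phi> \<in> fst \<Psi>"
    with \<Theta>_fst show "\<phi> \<in> fst (succ_type \<Theta>)" by (auto simp: succ_type_def)
  qed
  then have "succ_type \<Theta> = \<Psi>" using \<Theta> \<Psi> by (intro prime_type_eqI succ_type_prime)
  moreover have "leq_c \<Phi> \<Theta>" using \<Phi> \<Theta> \<Theta>_fst by (simp add: leq_c_prime_type_iff)
  ultimately show ?thesis using \<Theta> by blast
qed

end

theorem lemma5p5:
  assumes adm: "admissible M \<Lambda>"
  shows "(\<forall>\<Phi>\<in>Wc M \<Lambda>. \<exists>!\<Psi>. (\<Phi>, \<Psi>) \<in> Sc M \<Lambda>)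
       \<and> (\<forall>\<Phi> \<Phi>' \<Psi> \<Psi>'. (\<Phi>, \<Psi>) \<in> Sc M \<Lambda> \<longrightarrow> (\<Phi>', \<Psi>') \<in> Sc M \<Lambda> \<longrightarrow>
             leq_c \<Phi> \<Phi>' \<longrightarrow> leq_c \<Psi> \<Psi>')
       \<and> ((\<forall>\<phi> \<psi>. \<phi> \<in> lang M \<longrightarrow> \<psi> \<in> lang M \<longrightarrow>
              Imp (Imp (Next \<phi>) (Next \<psi>)) (Next (Imp \<phi> \<psi>)) \<in> \<Lambda>) \<longrightarrow>
          (\<forall>\<Phi> \<Psi>0 \<Psi>. (\<Phi>, \<Psi>0) \<in> Sc M \<Lambda> \<longrightarrow> \<Psi> \<in> Wc M \<Lambda> \<longrightarrow> leq_c \<Psi>0 \<Psi> \<longrightarrow>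
             (\<exists>\<Theta>\<in>Wc M \<Lambda>. leq_c \<Phi> \<Theta> \<and> (\<Theta>, \<Psi>) \<in> Sc M \<Lambda>)))"
proof -
  interpret admissible_logic M \<Lambda> using adm by unfold_locales
  have functional: "\<forall>\<Phi>\<in>Wc M \<Lambda>. \<exists>!\<Psi>. (\<Phi>, \<Psi>) \<in> Sc M \<Lambda>"
    by (simp add: Sc_iff Wc_def)
  have monotone: "\<forall>\<Phi> \<Phi>' \<Psi> \<Psi>'. (\<Phi>, \<Psi>) \<in> Sc M \<Lambda> \<longrightarrow> (\<Phi>', \<Psi>') \<in> Sc M \<Lambda> \<longrightarrow>
      leq_c \<Phi> \<Phi>' \<longrightarrow> leq_c \<Psi> \<Psi>'"
    by (simp add: Sc_iff succ_type_mono)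
  have "\<exists>\<Theta>\<in>Wc M \<Lambda>. leq_c \<Phi> \<Theta> \<and> (\<Theta>, \<Psi>) \<in> Sc M \<Lambda>"
    if "\<forall>\<phi> \<psi>. \<phi> \<in> lang M \<longrightarrow> \<psi> \<in> lang M \<longrightarrow> Imp (Imp (Next \<phi>) (Next \<psi>)) (Next (Imp \<phi> \<psi>)) \<in> \<Lambda>"
      and "(\<Phi>, \<Psi>\<^sub>0) \<in> Sc M \<Lambda>" "\<Psi> \<in> Wc M \<Lambda>" "leq_c \<Psi>\<^sub>0 \<Psi>" for \<Phi> \<Psi>\<^sub>0 \<Psi>
    using that succ_type_open[of \<Phi> \<Psi>] by (auto simp: Sc_iff Wc_def)
  with functional monotone show ?thesis by blast
qed

end
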